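(* Let $(X,Y)$ be a pair of real random variables whose marginal distributions are light-tailed. Then there exists a coupling of $(X,Y)$ with a pair $(\xi,\eta)$ of i.i.d. random variables whose common distribution is light-tailed, such that $$\max(X,Y)\le\min(\xi,\eta)\quad\text{a.s.}$$
   Context: A real random variable $Z$ (or its distribution) is light-tailed if $\mathbf E\,e^{cZ}<\infty$ for some constant $c>0$. *)

theory Defs
  imports "HOL-Probability.Probability"
begin

definition light_tailed :: "real measure \<Rightarrow> bool" where
  "light_tailed \<mu> \<longleftrightarrow> (\<exists>c>0. (\<integral>\<^sup>+ x. ennreal (exp (c * x)) \<partial>\<mu>) < \<infinity>)"

end

theory Submission
  imports Defs
begin

text \<open>
  Put K = nat \<lceil>max X Y\<rceil>, a natural-number random variable with
  max X Y \<le> K, and let T k = P(K \<ge> k).  Let \<nu> be the law on \<nat> with tails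
  \<nu>{k..} = sqrt (T k).  If \<xi>, \<eta> are independent with law \<nu>, then
  P(min \<xi> \<eta> \<ge> k) = (\<nu>{k..})^2 = T k, so min \<xi> \<eta> has the same law as K.  The coupling
  is obtained by gluing: sample (X, Y), then draw (\<xi>, \<eta>) from the product law
  conditioned on min \<xi> \<eta> = K; on this event max X Y \<le> K = min \<xi> \<eta>.
  Light tails survive: light-tailed laws have exponentially small tails (Chernoff),
  K inherits such a bound from X and Y, its square root is again exponentially small,
  and a law on \<nat> with exponentially small tails is light-tailed.
\<close>

section \<open>Light tails\<close>

lemma light_tailed_distr_iff:
  assumes "X \<in> borel_measurable M"
  shows "light_tailed (distr M borel X) \<longleftrightarrow> (\<exists>c>0. (\<integral>\<^sup>+\<omega>. ennreal (exp (c * X \<omega>)) \<partial>M) < \<infinity>)"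
  using assms by (simp add: light_tailed_def nn_integral_distr)

lemma exp_le_one_plus_exp_faster:
  fixes c d x :: real
  assumes "0 < c" "c \<le> d"
  shows "exp (c * x) \<le> 1 + exp (d * x)"
proof (cases "0 \<le> x")
  case True
  then have "c * x \<le> d * x" using assms by (simp add: mult_right_mono)
  then have "exp (c * x) \<le> exp (d * x)" by simp
  then show ?thesis by linarith
next
  case False
  then have "exp (c * x) \<le> 1" using assms by (simp add: mult_pos_neg less_imp_le)
  then show ?thesis using exp_gt_zero[of "d * x"] by linarith
qed

lemma light_tailed_max:
  assumes M: "prob_space M" and [measurable]: "X \<in> borel_measurable M" "Y \<in> borel_measurable M"
    and "light_tailed (distr M borel X)" "light_tailed (distr M borel Y)"
  shows "light_tailed (distr M borel (\<lambda>\<omega>. max (X \<omega>) (Y \<omega>)))"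
proof -
  obtain cX where cX: "0 < cX" "(\<integral>\<^sup>+\<omega>. ennreal (exp (cX * X \<omega>)) \<partial>M) < \<infinity>"
    using assms by (auto simp: light_tailed_distr_iff)
  obtain cY where cY: "0 < cY" "(\<integral>\<^sup>+\<omega>. ennreal (exp (cY * Y \<omega>)) \<partial>M) < \<infinity>"
    using assms by (auto simp: light_tailed_distr_iff)
  define c where "c = min cX cY"
  have c: "0 < c" "c \<le> cX" "c \<le> cY" using cX cY by (auto simp: c_def)
  have bound: "exp (c * max (X \<omega>) (Y \<omega>)) \<le> 2 + exp (cX * X \<omega>) + exp (cY * Y \<omega>)" for \<omega>
  proof -
    have "exp (c * max (X \<omega>) (Y \<omega>)) \<le> exp (c * X \<omega>) + exp (c * Y \<omega>)"
      using c(1) by (cases "X \<omega> \<le> Y \<omega>") (auto simp: max_def add_increasing)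
    then show ?thesis
      using exp_le_one_plus_exp_faster[OF c(1,2), of "X \<omega>"]
        exp_le_one_plus_exp_faster[OF c(1,3), of "Y \<omega>"] by linarith
  qed
  have "(\<integral>\<^sup>+\<omega>. ennreal (exp (c * max (X \<omega>) (Y \<omega>))) \<partial>M)
      \<le> (\<integral>\<^sup>+\<omega>. 2 + ennreal (exp (cX * X \<omega>)) + ennreal (exp (cY * Y \<omega>)) \<partial>M)"
    using ennreal_leI[OF bound] by (intro nn_integral_mono) (simp add: ennreal_plus)
  also have "\<dots> = 2 + (\<integral>\<^sup>+\<omega>. ennreal (exp (cX * X \<omega>)) \<partial>M) + (\<integral>\<^sup>+\<omega>. ennreal (exp (cY * Y \<omega>)) \<partial>M)"
    by (simp add: nn_integral_add prob_space.emeasure_space_1[OF M])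
  also have "\<dots> < \<infinity>" using cX cY by simp
  finally show ?thesis using c by (auto simp: light_tailed_distr_iff)
qed

text \<open>Rounding up and cutting off at 0 preserves light tails: it increases the variable
  by at most its negative part plus 1.\<close>
lemma light_tailed_nat_ceiling:
  assumes M: "prob_space M" and [measurable]: "V \<in> borel_measurable M"
    and "light_tailed (distr M borel V)"
  shows "light_tailed (distr M borel (\<lambda>\<omega>. real (nat \<lceil>V \<omega>\<rceil>)))"
proof -
  obtain c where c: "0 < c" "(\<integral>\<^sup>+\<omega>. ennreal (exp (c * V \<omega>)) \<partial>M) < \<infinity>"
    using assms by (auto simp: light_tailed_distr_iff)
  have bound: "exp (c * real (nat \<lceil>V \<omega>\<rceil>)) \<le> exp c * (1 + exp (c * V \<omega>))" for \<omega>
  proof -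
    have "c * real (nat \<lceil>V \<omega>\<rceil>) \<le> c * (max (V \<omega>) 0 + 1)"
      using c(1) by (intro mult_left_mono) linarith+
    then have "exp (c * real (nat \<lceil>V \<omega>\<rceil>)) \<le> exp c * exp (c * max (V \<omega>) 0)"
      by (simp add: algebra_simps flip: exp_add)
    also have "exp (c * max (V \<omega>) 0) \<le> 1 + exp (c * V \<omega>)"
      by (simp add: max_def)
    finally show ?thesis by simp
  qed
  have "(\<integral>\<^sup>+\<omega>. ennreal (exp (c * real (nat \<lceil>V \<omega>\<rceil>))) \<partial>M)
      \<le> (\<integral>\<^sup>+\<omega>. ennreal (exp c) * (1 + ennreal (exp (c * V \<omega>))) \<partial>M)"
    using ennreal_leI[OF bound] by (intro nn_integral_mono) (simp add: ennreal_plus ennreal_mult)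
  also have "\<dots> = ennreal (exp c) * (1 + (\<integral>\<^sup>+\<omega>. ennreal (exp (c * V \<omega>)) \<partial>M))"
    by (simp add: nn_integral_cmult nn_integral_add prob_space.emeasure_space_1[OF M])
  also have "\<dots> < \<infinity>" using c by (simp add: ennreal_mult_less_top)
  finally show ?thesis using c by (auto simp: light_tailed_distr_iff)
qed

lemma light_tailed_exponential_tail:
  assumes M: "prob_space M" and [measurable]: "V \<in> borel_measurable M"
    and "light_tailed (distr M borel V)"
  obtains c C where "0 < c" and "\<And>t. measure M {\<omega>\<in>space M. t \<le> V \<omega>} \<le> C * exp (- c * t)"
proof -
  interpret prob_space M by (rule M)
  obtain c where c: "0 < c" "(\<integral>\<^sup>+\<omega>. ennreal (exp (c * V \<omega>)) \<partial>M) < \<infinity>"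
    using assms by (auto simp: light_tailed_distr_iff)
  define E where "E = (\<integral>\<^sup>+\<omega>. ennreal (exp (c * V \<omega>)) \<partial>M)"
  have "measure M {\<omega>\<in>space M. t \<le> V \<omega>} \<le> enn2real E * exp (- c * t)" for t
  proof -
    have "emeasure M {\<omega>\<in>space M. t \<le> V \<omega>}
        \<le> ennreal (exp (- c * t)) * (\<integral>\<^sup>+\<omega>. ennreal (exp (c * V \<omega>)) * indicator (space M) \<omega> \<partial>M)"
      using c(1) by (intro Chernoff_ineq_nn_integral_ge) auto
    also have "(\<integral>\<^sup>+\<omega>. ennreal (exp (c * V \<omega>)) * indicator (space M) \<omega> \<partial>M) = E"
      unfolding E_def by (intro nn_integral_cong) auto
    also have "ennreal (exp (- c * t)) * E = ennreal (enn2real E * exp (- c * t))"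
      using c(2) by (simp add: E_def ennreal_mult' less_top mult.commute)
    finally show ?thesis by (simp add: emeasure_eq_measure)
  qed
  with c(1) show ?thesis by (rule that)
qed

text \<open>Conversely, a law on \<nat> with exponentially small tails is light-tailed
  (with half the rate): its exponential moment is dominated by a geometric series.\<close>
lemma light_tailed_of_exponential_tail:
  fixes \<nu> :: "nat pmf"
  assumes c: "0 < c" and tail: "\<And>k. measure_pmf.prob \<nu> {k..} \<le> C * exp (- c * k)"
  shows "light_tailed (distr (measure_pmf \<nu>) borel real)"
proof -
  define r where "r = exp (- c / 2)"
  have r: "0 \<le> r" "r < 1" using c by (auto simp: r_def)
  have C: "0 \<le> C" using tail[of 0] measure_nonneg[of \<nu> "{0..}"] by simp
  have term_bound: "pmf \<nu> k * exp (c / 2 * real k) \<le> C * r ^ k" for k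
  proof -
    have "pmf \<nu> k \<le> measure_pmf.prob \<nu> {k..}"
      by (simp flip: measure_pmf_single add: measure_pmf.finite_measure_mono)
    then have "pmf \<nu> k * exp (c / 2 * real k) \<le> C * exp (- c * k) * exp (c / 2 * real k)"
      using tail[of k] by (simp add: mult_right_mono)
    also have "\<dots> = C * exp (- c / 2 * k)"
      by (simp add: algebra_simps flip: exp_add)
    also have "exp (- c / 2 * k) = r ^ k"
      by (simp add: r_def mult.commute flip: exp_of_nat_mult)
    finally show ?thesis .
  qed
  have "(\<integral>\<^sup>+ x. ennreal (exp (c / 2 * x)) \<partial>distr (measure_pmf \<nu>) borel real)
      = (\<Sum>k. ennreal (pmf \<nu> k * exp (c / 2 * real k)))"
    by (simp add: nn_integral_distr nn_integral_measure_pmf nn_integral_count_space_nat ennreal_mult)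
  also have "\<dots> \<le> (\<Sum>k. ennreal (C * r ^ k))"
    by (intro suminf_le summableI ennreal_leI term_bound)
  also have "\<dots> = ennreal (C * (1 / (1 - r)))"
    using r C by (intro suminf_ennreal_eq sums_mult geometric_sums) auto
  also have "\<dots> < \<infinity>" by simp
  finally show ?thesis unfolding light_tailed_def using c by (intro exI[of _ "c / 2"]) auto
qed

lemma light_tailed_sqrt_tail:
  fixes K :: "'a \<Rightarrow> nat" and \<nu> :: "nat pmf"
  assumes M: "prob_space M" and [measurable]: "K \<in> M \<rightarrow>\<^sub>M count_space UNIV"
    and light: "light_tailed (distr M borel (\<lambda>\<omega>. real (K \<omega>)))"
    and tails: "\<And>k. measure_pmf.prob \<nu> {k..} = sqrt (measure M {\<omega>\<in>space M. k \<le> K \<omega>})"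
  shows "light_tailed (distr (measure_pmf \<nu>) borel real)"
proof -
  have K_real: "(\<lambda>\<omega>. real (K \<omega>)) \<in> borel_measurable M" by measurable
  obtain c C where c: "0 < c"
    and K_tail: "\<And>t. measure M {\<omega>\<in>space M. t \<le> real (K \<omega>)} \<le> C * exp (- c * t)"
    using light_tailed_exponential_tail[OF M K_real light] by blast
  show ?thesis
  proof (rule light_tailed_of_exponential_tail)
    fix k :: nat
    have sqrt_exp: "sqrt (exp (- c * k)) = exp (- (c / 2) * k)"
      by (rule real_sqrt_unique) (simp_all add: power2_eq_square flip: exp_add)
    have "measure_pmf.prob \<nu> {k..} \<le> sqrt (C * exp (- c * k))"
      using K_tail[of k] by (simp add: tails)
    also have "\<dots> = sqrt C * exp (- (c / 2) * k)"
      by (simp only: real_sqrt_mult sqrt_exp)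
    finally show "measure_pmf.prob \<nu> {k..} \<le> sqrt C * exp (- (c / 2) * k)" .
  qed (use c in simp)
qed

section \<open>Laws on \<nat> with prescribed tails\<close>

text \<open>The law on \<nat> whose tail function k \<mapsto> P{k..} is the given g.\<close>
definition tail_pmf :: "(nat \<Rightarrow> real) \<Rightarrow> nat pmf" where
  "tail_pmf g = embed_pmf (\<lambda>k. g k - g (Suc k))"

context
  fixes g :: "nat \<Rightarrow> real"
  assumes decreasing: "\<And>k. g (Suc k) \<le> g k" and start: "g 0 = 1" and vanishing: "g \<longlonglongrightarrow> 0"
begin

lemma pmf_tail_pmf: "pmf (tail_pmf g) k = g k - g (Suc k)"
proof -
  have telescoping: "(\<lambda>k. g k - g (Suc k)) sums 1"
    using telescope_sums'[OF vanishing] start by simp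
  have nonneg: "0 \<le> g k - g (Suc k)" for k
    using decreasing[of k] by simp
  have "(\<Sum>k. ennreal (g k - g (Suc k))) = ennreal 1"
    by (rule suminf_ennreal_eq[OF nonneg telescoping])
  then have "(\<integral>\<^sup>+k. ennreal (g k - g (Suc k)) \<partial>count_space UNIV) = 1"
    by (simp add: nn_integral_count_space_nat)
  then show ?thesis
    unfolding tail_pmf_def by (subst pmf_embed_pmf) (simp_all add: decreasing)
qed

lemma prob_tail_pmf_atLeast: "measure_pmf.prob (tail_pmf g) {k..} = g k"
proof -
  have "measure_pmf.prob (tail_pmf g) {..<k} = (\<Sum>j<k. g j - g (Suc j))"
    by (simp add: measure_measure_pmf_finite pmf_tail_pmf)
  also have "\<dots> = 1 - g k"
    using sum_lessThan_telescope'[of g k] start by simp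
  finally have "measure_pmf.prob (tail_pmf g) {..<k} = 1 - g k" .
  moreover have "{k..} = UNIV - {..<k}" by auto
  ultimately show ?thesis
    using measure_pmf.prob_compl[of "{..<k}" "tail_pmf g"] by simp
qed

end

text \<open>The minimum of two i.i.d. draws is at least k iff both are: its tails are the
  squared tails.\<close>
lemma prob_min_pair_pmf_atLeast:
  fixes \<nu> :: "'a :: {linorder, countable} pmf"
  shows "measure_pmf.prob (map_pmf (\<lambda>q. min (fst q) (snd q)) (pair_pmf \<nu> \<nu>)) {k..}
           = (measure_pmf.prob \<nu> {k..})\<^sup>2"
proof -
  have "(\<lambda>q. min (fst q) (snd q)) -` {k..} = {k..} \<times> {k..}" by auto
  then show ?thesis
    by (simp add: measure_map_pmf measure_pmf_prob_product power2_eq_square)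
qed

lemma distr_eq_pmf_by_tails:
  fixes K :: "'a \<Rightarrow> nat" and p :: "nat pmf"
  assumes M: "prob_space M" and [measurable]: "K \<in> M \<rightarrow>\<^sub>M count_space UNIV"
    and tails: "\<And>k. measure M {\<omega>\<in>space M. k \<le> K \<omega>} = measure_pmf.prob p {k..}"
  shows "distr M (count_space UNIV) K = measure_pmf p"
proof (rule measure_eqI_countable[where A=UNIV])
  interpret prob_space M by (rule M)
  fix k :: nat
  have "{\<omega>\<in>space M. K \<omega> = k} = {\<omega>\<in>space M. k \<le> K \<omega>} - {\<omega>\<in>space M. Suc k \<le> K \<omega>}"
    by auto
  then have "prob {\<omega>\<in>space M. K \<omega> = k} = prob {\<omega>\<in>space M. k \<le> K \<omega>} - prob {\<omega>\<in>space M. Suc k \<le> K \<omega>}"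
    by (simp add: finite_measure_Diff subset_eq)
  also have "\<dots> = measure_pmf.prob p ({k..} - {Suc k..})"
    by (simp add: tails measure_pmf.finite_measure_Diff subset_eq)
  also have "{k..} - {Suc k..} = {k}" by auto
  finally show "emeasure (distr M (count_space UNIV) K) {k} = emeasure (measure_pmf p) {k}"
    by (simp add: emeasure_distr emeasure_eq_measure measure_pmf.emeasure_eq_measure vimage_def Int_def conj_commute)
qed auto

lemma nat_law_as_min_of_iid:
  fixes K :: "'a \<Rightarrow> nat"
  assumes M: "prob_space M" and [measurable]: "K \<in> M \<rightarrow>\<^sub>M count_space UNIV"
  obtains \<nu> :: "nat pmf"
  where "\<And>k. measure_pmf.prob \<nu> {k..} = sqrt (measure M {\<omega>\<in>space M. k \<le> K \<omega>})"
    and "distr M (count_space UNIV) K = map_pmf (\<lambda>q. min (fst q) (snd q)) (pair_pmf \<nu> \<nu>)"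
proof -
  interpret prob_space M by (rule M)
  define T where "T k = prob {\<omega>\<in>space M. k \<le> K \<omega>}" for k
  have T_decreasing: "T (Suc k) \<le> T k" for k
    unfolding T_def by (intro finite_measure_mono) auto
  have T_vanishing: "T \<longlonglongrightarrow> 0"
  proof -
    have "T \<longlonglongrightarrow> prob (\<Inter>k. {\<omega>\<in>space M. k \<le> K \<omega>})"
      unfolding T_def by (intro finite_Lim_measure_decseq) (auto simp: decseq_def)
    moreover have "(\<Inter>k. {\<omega>\<in>space M. k \<le> K \<omega>}) = {}"
      by auto (meson Suc_n_not_le_n)
    ultimately show ?thesis by simp
  qed
  define \<nu> where "\<nu> = tail_pmf (\<lambda>k. sqrt (T k))"
  have \<nu>_tail: "measure_pmf.prob \<nu> {k..} = sqrt (T k)" for k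
    unfolding \<nu>_def
  proof (rule prob_tail_pmf_atLeast)
    show "sqrt (T (Suc k)) \<le> sqrt (T k)" for k using T_decreasing by simp
    show "sqrt (T 0) = 1" by (simp add: T_def prob_space)
    show "(\<lambda>k. sqrt (T k)) \<longlonglongrightarrow> 0" using tendsto_real_sqrt[OF T_vanishing] by simp
  qed
  have "distr M (count_space UNIV) K = map_pmf (\<lambda>q. min (fst q) (snd q)) (pair_pmf \<nu> \<nu>)"
    by (rule distr_eq_pmf_by_tails[OF M])
      (simp_all del: measure_map_pmf add: prob_min_pair_pmf_atLeast \<nu>_tail T_def)
  with \<nu>_tail show ?thesis unfolding T_def by (rule that)
qed

section \<open>Gluing along a discrete statistic\<close>

text \<open>The projections are Borel measurable on a product of second countable spaces
  (whose Borel sets are generated by rectangles).\<close>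
lemma measurable_fst_borel [measurable]:
  "fst \<in> (borel :: ('u::second_countable_topology \<times> 'v::second_countable_topology) measure) \<rightarrow>\<^sub>M borel"
  by (metis borel_prod measurable_fst)

lemma measurable_snd_borel [measurable]:
  "snd \<in> (borel :: ('u::second_countable_topology \<times> 'v::second_countable_topology) measure) \<rightarrow>\<^sub>M borel"
  by (metis borel_prod measurable_snd)

definition fibre_pmf :: "'b pmf \<Rightarrow> ('b \<Rightarrow> 'c) \<Rightarrow> 'c \<Rightarrow> 'b pmf" where
  "fibre_pmf Q f x = cond_pmf Q {q. f q = x}"

lemma bind_fibre_pmf: "bind_pmf (map_pmf f Q) (fibre_pmf Q f) = Q"
  unfolding fibre_pmf_def
proof (rule bind_cond_pmf_cancel[where R = "\<lambda>x q. f q = x"])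
  fix x y
  assume "y \<in> set_pmf Q" "f y = x"
  moreover have "f -` {f y} = {q. f q = f y}" by auto
  ultimately show "measure_pmf.prob Q {q. f q = x} = measure_pmf.prob (map_pmf f Q) {x. f y = x}"
    by (simp add: measure_map_pmf eq_commute[of "f y"])
qed auto

lemma set_fibre_pmf:
  assumes "x \<in> set_pmf (map_pmf f Q)" and "q \<in> set_pmf (fibre_pmf Q f x)"
  shows "f q = x"
proof -
  have "set_pmf Q \<inter> {q. f q = x} \<noteq> {}" using assms(1) by auto
  then show ?thesis using assms(2) by (simp add: fibre_pmf_def)
qed

text \<open>Draw Z from M and then a point q from Q
  conditioned on f q = K.\<close>
context
  fixes M :: "'a measure" and Z :: "'a \<Rightarrow> 'u::second_countable_topology"
    and K :: "'a \<Rightarrow> 'c" and Q :: "'b pmf" and f :: "'b \<Rightarrow> 'c"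
    and R :: "'b \<Rightarrow> 'v::second_countable_topology"
  assumes M: "prob_space M" and Z [measurable]: "Z \<in> borel_measurable M"
    and K [measurable]: "K \<in> M \<rightarrow>\<^sub>M count_space UNIV"
    and law_K: "distr M (count_space UNIV) K = measure_pmf (map_pmf f Q)"
begin

interpretation prob_space M by (rule M)

definition glue_kernel :: "'a \<Rightarrow> ('u \<times> 'v) measure" where
  "glue_kernel \<omega> = distr (measure_pmf (fibre_pmf Q f (K \<omega>))) borel (\<lambda>q. (Z \<omega>, R q))"

definition glued :: "('u \<times> 'v) measure" where
  "glued = M \<bind> glue_kernel"

text \<open>The kernel is a measurable family of probability measures, as it factors through K.\<close>
lemma glue_kernel_measurable: "glue_kernel \<in> M \<rightarrow>\<^sub>M prob_algebra borel"
proof -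
  have [measurable]: "R \<in> count_space UNIV \<rightarrow>\<^sub>M borel" by simp
  have "(\<lambda>\<omega>. measure_pmf (fibre_pmf Q f (K \<omega>))) \<in> M \<rightarrow>\<^sub>M prob_algebra (count_space UNIV)"
    by (rule measurable_compose[OF K])
      (auto simp: space_prob_algebra measure_pmf.prob_space_axioms)
  then show ?thesis
    unfolding glue_kernel_def by (rule measurable_distr_prob_space2) measurable
qed

lemma prob_space_glued: "prob_space glued"
  unfolding glued_def
  by (rule prob_space_bind'[OF _ glue_kernel_measurable]) (auto simp: space_prob_algebra prob_space_axioms)

lemma sets_glued: "sets glued = sets borel"
  unfolding glued_def
  by (rule sets_bind'[OF _ glue_kernel_measurable]) (auto simp: space_prob_algebra prob_space_axioms)

text \<open>The first marginal is the law of Z, since each kernel measure fixes Z \<omega>.\<close>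
lemma distr_glued_fst: "distr glued borel fst = distr M borel Z"
proof -
  have "distr glued borel fst = M \<bind> (\<lambda>\<omega>. distr (glue_kernel \<omega>) borel fst)"
    unfolding glued_def
    by (rule distr_bind[OF measurable_prob_algebraD[OF glue_kernel_measurable]]) (auto simp: not_empty)
  also have "\<dots> = M \<bind> (\<lambda>\<omega>. return borel (Z \<omega>))"
    by (intro bind_cong refl) (simp add: glue_kernel_def distr_distr comp_def)
  also have "\<dots> = distr M borel Z"
    by (rule bind_return_distr') (auto simp: not_empty)
  finally show ?thesis .
qed

text \<open>The second marginal is the law of R under Q: integrating out \<omega> leaves the law of
  K mixed with the fibre laws, which is Q by bind_fibre_pmf.\<close>
lemma distr_glued_snd: "distr glued borel snd = distr (measure_pmf Q) borel R"
proof -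
  have fibre_kernel: "(\<lambda>x. distr (measure_pmf (fibre_pmf Q f x)) borel R) \<in> count_space UNIV \<rightarrow>\<^sub>M subprob_algebra borel"
    by (auto simp: space_subprob_algebra intro!: prob_space_imp_subprob_space measure_pmf.prob_space_distr)
  have "distr glued borel snd = M \<bind> (\<lambda>\<omega>. distr (glue_kernel \<omega>) borel snd)"
    unfolding glued_def
    by (rule distr_bind[OF measurable_prob_algebraD[OF glue_kernel_measurable]]) (auto simp: not_empty)
  also have "\<dots> = M \<bind> (\<lambda>\<omega>. distr (measure_pmf (fibre_pmf Q f (K \<omega>))) borel R)"
    by (intro bind_cong refl) (simp add: glue_kernel_def distr_distr comp_def)
  also have "\<dots> = distr M (count_space UNIV) K \<bind> (\<lambda>x. distr (measure_pmf (fibre_pmf Q f x)) borel R)"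
    by (rule bind_distr[symmetric, OF K fibre_kernel]) (auto simp: not_empty)
  also have "\<dots> = distr (measure_pmf (map_pmf f Q) \<bind> (\<lambda>x. measure_pmf (fibre_pmf Q f x))) borel R"
    unfolding law_K
    by (rule distr_bind[symmetric, where K = "count_space UNIV"])
      (auto simp: space_subprob_algebra intro: prob_space_imp_subprob_space measure_pmf.prob_space_axioms)
  also have "\<dots> = distr (measure_pmf Q) borel R"
    by (simp add: bind_fibre_pmf flip: measure_pmf_bind)
  finally show ?thesis .
qed

text \<open>Almost surely K \<omega> is a value taken by f, so the kernel only charges points with
  f q = K \<omega>.\<close>
lemma AE_glued:
  assumes [measurable]: "Measurable.pred borel (\<lambda>z. P (fst z) (snd z))"
    and compatible: "\<And>\<omega> q. f q = K \<omega> \<Longrightarrow> P (Z \<omega>) (R q)"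
  shows "AE z in glued. P (fst z) (snd z)"
  unfolding glued_def
proof (subst AE_bind[OF measurable_prob_algebraD[OF glue_kernel_measurable]])
  have "AE x in distr M (count_space UNIV) K. x \<in> set_pmf (map_pmf f Q)"
    unfolding law_K by (rule AE_measure_pmf)
  then have "AE \<omega> in M. K \<omega> \<in> set_pmf (map_pmf f Q)"
    by (subst (asm) AE_distr_iff) auto
  then show "AE \<omega> in M. AE z in glue_kernel \<omega>. P (fst z) (snd z)"
  proof eventually_elim
    case (elim \<omega>)
    have "P (Z \<omega>) (R q)" if "q \<in> set_pmf (fibre_pmf Q f (K \<omega>))" for q
      using compatible set_fibre_pmf[OF elim that] .
    then show ?case
      unfolding glue_kernel_def by (subst AE_distr_iff) (auto simp: AE_measure_pmf_iff)
  qed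
qed simp

lemma coupling_by_gluing:
  assumes "Measurable.pred borel (\<lambda>z. P (fst z) (snd z))"
    and "\<And>\<omega> q. f q = K \<omega> \<Longrightarrow> P (Z \<omega>) (R q)"
  shows "\<exists>N :: ('u \<times> 'v) measure. prob_space N \<and> sets N = sets borel \<and>
           distr N borel fst = distr M borel Z \<and>
           distr N borel snd = distr (measure_pmf Q) borel R \<and>
           (AE z in N. P (fst z) (snd z))"
  by (intro exI[of _ glued] conjI prob_space_glued sets_glued distr_glued_fst distr_glued_snd
      AE_glued[OF assms])

end

lemma distr_pair_pmf:
  fixes A :: "'a::countable pmf" and B :: "'b::countable pmf"
    and g :: "'a \<Rightarrow> 'u::second_countable_topology" and h :: "'b \<Rightarrow> 'v::second_countable_topology"
  shows "distr (measure_pmf (pair_pmf A B)) borel (map_prod g h)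
           = distr (measure_pmf A) borel g \<Otimes>\<^sub>M distr (measure_pmf B) borel h"
proof (rule pair_measure_eqI[symmetric])
  interpret A: prob_space "distr (measure_pmf A) borel g"
    by (rule measure_pmf.prob_space_distr) simp
  interpret B: prob_space "distr (measure_pmf B) borel h"
    by (rule measure_pmf.prob_space_distr) simp
  show "sigma_finite_measure (distr (measure_pmf A) borel g)"
    and "sigma_finite_measure (distr (measure_pmf B) borel h)" by unfold_locales
  show "sets (distr (measure_pmf A) borel g \<Otimes>\<^sub>M distr (measure_pmf B) borel h)
          = sets (distr (measure_pmf (pair_pmf A B)) borel (map_prod g h))"
  proof -
    have "sets (distr (measure_pmf A) borel g \<Otimes>\<^sub>M distr (measure_pmf B) borel h) = sets (borel \<Otimes>\<^sub>M borel)"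
      by (rule sets_pair_measure_cong) simp_all
    then show ?thesis by (simp only: borel_prod) simp
  qed
  fix S T assume S: "S \<in> sets (distr (measure_pmf A) borel g)" and T: "T \<in> sets (distr (measure_pmf B) borel h)"
  have "S \<times> T \<in> sets (borel :: ('u \<times> 'v) measure)"
    using S T by (simp flip: borel_prod)
  then have "emeasure (distr (measure_pmf (pair_pmf A B)) borel (map_prod g h)) (S \<times> T)
        = emeasure (measure_pmf (pair_pmf A B)) (g -` S \<times> h -` T)"
    by (simp add: emeasure_distr map_prod_vimage)
  also have "\<dots> = emeasure (measure_pmf A) (g -` S) * emeasure (measure_pmf B) (h -` T)"
    by (simp add: measure_pmf.emeasure_eq_measure measure_pmf_prob_product ennreal_mult)
  also have "\<dots> = emeasure (distr (measure_pmf A) borel g) S * emeasure (distr (measure_pmf B) borel h) T"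
    using S T by (simp add: emeasure_distr)
  finally show "emeasure (distr (measure_pmf A) borel g) S * emeasure (distr (measure_pmf B) borel h) T
      = emeasure (distr (measure_pmf (pair_pmf A B)) borel (map_prod g h)) (S \<times> T)" ..
qed

theorem mainTheorem12:
  fixes M :: "'a measure" and X Y :: "'a \<Rightarrow> real"
  assumes "prob_space M"
    and "X \<in> borel_measurable M" and "Y \<in> borel_measurable M"
    and "light_tailed (distr M borel X)" and "light_tailed (distr M borel Y)"
  shows "\<exists>N :: ((real \<times> real) \<times> (real \<times> real)) measure.
           prob_space N \<and> sets N = sets borel \<and>
           distr N borel fst = distr M borel (\<lambda>\<omega>. (X \<omega>, Y \<omega>)) \<and>
           (\<exists>\<mu> :: real measure. prob_space \<mu> \<and> sets \<mu> = sets borel \<and> light_tailed \<mu> \<and>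
              distr N borel snd = \<mu> \<Otimes>\<^sub>M \<mu>) \<and>
           (AE z in N. max (fst (fst z)) (snd (fst z)) \<le> min (fst (snd z)) (snd (snd z)))"
proof -
  note [measurable] = assms(2,3)
  define K where "K \<omega> = nat \<lceil>max (X \<omega>) (Y \<omega>)\<rceil>" for \<omega>
  have K_measurable [measurable]: "K \<in> M \<rightarrow>\<^sub>M count_space UNIV"
    unfolding K_def by measurable
  have K_light: "light_tailed (distr M borel (\<lambda>\<omega>. real (K \<omega>)))"
    unfolding K_def by (rule light_tailed_nat_ceiling[OF assms(1) _ light_tailed_max[OF assms]]) measurable
  obtain \<nu> where \<nu>_tail: "\<And>k. measure_pmf.prob \<nu> {k..} = sqrt (measure M {\<omega>\<in>space M. k \<le> K \<omega>})"
    and law_K: "distr M (count_space UNIV) K = map_pmf (\<lambda>q. min (fst q) (snd q)) (pair_pmf \<nu> \<nu>)"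
    using nat_law_as_min_of_iid[OF assms(1) K_measurable] by blast
  define \<mu> where "\<mu> = distr (measure_pmf \<nu>) borel real"
  have "prob_space \<mu>" "sets \<mu> = sets borel" "light_tailed \<mu>"
    unfolding \<mu>_def using light_tailed_sqrt_tail[OF assms(1) K_measurable K_light \<nu>_tail]
    by (auto intro: measure_pmf.prob_space_distr)
  have below: "max (X \<omega>) (Y \<omega>) \<le> min (real (fst q)) (real (snd q))"
    if "min (fst q) (snd q) = K \<omega>" for \<omega> q
    using that unfolding K_def by linarith
  have "(\<lambda>\<omega>. (X \<omega>, Y \<omega>)) \<in> borel_measurable M" by measurable
  from coupling_by_gluing[OF assms(1) this K_measurable law_K,
      where P = "\<lambda>a b. max (fst a) (snd a) \<le> min (fst b) (snd b)" and R = "map_prod real real"]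
  obtain N :: "((real \<times> real) \<times> (real \<times> real)) measure"
    where "prob_space N" "sets N = sets borel" "distr N borel fst = distr M borel (\<lambda>\<omega>. (X \<omega>, Y \<omega>))"
      and "distr N borel snd = \<mu> \<Otimes>\<^sub>M \<mu>"
      and "AE z in N. max (fst (fst z)) (snd (fst z)) \<le> min (fst (snd z)) (snd (snd z))"
    using below by (auto simp: \<mu>_def distr_pair_pmf)
  show ?thesis by (intro exI[of _ N] exI[of _ \<mu>] conjI) fact+
qed

end
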